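(* Let $V$ be a finite dimensional real vector space and let $\Delta \subset V \setminus \{0\}$ satisfy $\Delta = -\Delta$. Then every strongly parabolic subset of $\Delta$ is a parabolic subset of $\Delta$.
   Context: A subset $P \subset \Delta$ is called parabolic if (1) $\Delta = P \cup -P$, and (2) whenever $\alpha, \beta \in P$ and $\alpha+\beta \in \Delta$, then $\alpha+\beta \in P$. A partition $\Delta = \Delta^- \sqcup \Delta^0 \sqcup \Delta^+$ is called a triangular decomposition of $\Delta$ if there is a linear function $\lambda \in V^*$ with $\Delta^0 = \Delta \cap \ker \lambda$ and $\Delta^{\pm} = \{\alpha \in \Delta \mid \lambda(\alpha) \gtrless 0\}$. A subset $P \subset \Delta$ is called strongly parabolic (defined recursively) if $P = \Delta$, or $P = P^0 \sqcup \Delta^+$ for some triangular decomposition $\Delta = \Delta^- \sqcup \Delta^0 \sqcup \Delta^+$ (with linear function $\lambda$) and some subset $P^0 \subset \Delta^0$ that is strongly parabolic as a subset of $\Delta^0$ regarded inside the vector space $\ker \lambda$. *)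

theory Defs
  imports "HOL-Analysis.Analysis"
begin

definition lin_functional_on :: "'a::real_vector set \<Rightarrow> ('a \<Rightarrow> real) \<Rightarrow> bool" where
  "lin_functional_on W f \<longleftrightarrow>
     (\<forall>x\<in>W. \<forall>y\<in>W. f (x + y) = f x + f y) \<and> (\<forall>c. \<forall>x\<in>W. f (c *\<^sub>R x) = c * f x)"

definition parabolic :: "'a::real_vector set \<Rightarrow> 'a set \<Rightarrow> bool" where
  "parabolic \<Delta> P \<longleftrightarrow> P \<subseteq> \<Delta> \<and> \<Delta> = P \<union> uminus ` P \<and>
     (\<forall>\<alpha>\<in>P. \<forall>\<beta>\<in>P. \<alpha> + \<beta> \<in> \<Delta> \<longrightarrow> \<alpha> + \<beta> \<in> P)"

text \<open>strongly_parabolic W \<Delta> P: P is strongly parabolic in \<Delta>, where \<Delta> is regarded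
  inside the ambient vector space W (a subspace of the type).  The triangular decomposition
  is given by a linear functional \<lambda> on W; the recursion passes to ker \<lambda> (inside W).\<close>
inductive strongly_parabolic :: "'a::real_vector set \<Rightarrow> 'a set \<Rightarrow> 'a set \<Rightarrow> bool" where
  whole: "strongly_parabolic W \<Delta> \<Delta>"
| step: "\<lbrakk> subspace W; lin_functional_on W l; P0 \<subseteq> {\<alpha>\<in>\<Delta>. l \<alpha> = 0};
           strongly_parabolic {v\<in>W. l v = 0} {\<alpha>\<in>\<Delta>. l \<alpha> = 0} P0 \<rbrakk>
         \<Longrightarrow> strongly_parabolic W \<Delta> (P0 \<union> {\<alpha>\<in>\<Delta>. l \<alpha> > 0})"

end

theory Submission
  imports Defs
begin

text \<open>Roots with \<open>l < 0\<close> are negatives of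
  positive ones, and those with \<open>l = 0\<close> are covered by \<open>P0 \<union> -P0\<close> by induction, since the
  kernel slice of \<open>\<Delta>\<close> is again symmetric. For closedness, \<open>l\<close> is additive and
  nonnegative on the new set, so a sum lies in \<open>P0\<close>'s slice only if both summands do,
  where the induction hypothesis applies; otherwise \<open>l\<close> is positive on the sum.\<close>

lemma lin_functional_on_add:
  "lin_functional_on W l \<Longrightarrow> x \<in> W \<Longrightarrow> y \<in> W \<Longrightarrow> l (x + y) = l x + l y"
  unfolding lin_functional_on_def by blast

lemma lin_functional_on_minus:
  assumes "lin_functional_on W l" and "x \<in> W"
  shows "l (- x) = - l x"
proof -
  have "l ((-1) *\<^sub>R x) = (-1) * l x"
    using assms unfolding lin_functional_on_def by blast
  then show ?thesis by simp
qed

lemma uminus_image_eq_imp_minus_mem: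
  fixes A :: "'a::ab_group_add set"
  assumes "uminus ` A = A" and "x \<in> A"
  shows "- x \<in> A"
  using assms by force

lemma uminus_image_Collect_eq:
  fixes A :: "'a::ab_group_add set"
  assumes "uminus ` A = A" and "\<And>x. x \<in> A \<Longrightarrow> Q (- x) \<longleftrightarrow> Q x"
  shows "uminus ` {x\<in>A. Q x} = {x\<in>A. Q x}"
proof (intro equalityI subsetI)
  fix x assume "x \<in> uminus ` {x\<in>A. Q x}"
  then obtain y where "y \<in> A" "Q y" "x = - y" by blast
  then show "x \<in> {x\<in>A. Q x}"
    using assms uminus_image_eq_imp_minus_mem by auto
next
  fix x assume x: "x \<in> {x\<in>A. Q x}"
  then have "- x \<in> {x\<in>A. Q x}"
    using assms uminus_image_eq_imp_minus_mem by auto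
  then show "x \<in> uminus ` {x\<in>A. Q x}"
    by (rule rev_image_eqI) simp
qed

lemma parabolic_union_positive_part:
  assumes lin: "lin_functional_on W l" and "\<Delta> \<subseteq> W" and sym: "uminus ` \<Delta> = \<Delta>"
    and P0: "parabolic {\<alpha>\<in>\<Delta>. l \<alpha> = 0} P0"
  shows "parabolic \<Delta> (P0 \<union> {\<alpha>\<in>\<Delta>. l \<alpha> > 0})"
    (is "parabolic \<Delta> ?P")
proof -
  have inW: "x \<in> W" if "x \<in> \<Delta>" for x using that \<open>\<Delta> \<subseteq> W\<close> by blast
  have P0_sub: "P0 \<subseteq> {\<alpha>\<in>\<Delta>. l \<alpha> = 0}" and P0_cover: "{\<alpha>\<in>\<Delta>. l \<alpha> = 0} = P0 \<union> uminus ` P0"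
    and P0_closed: "\<And>a b. a \<in> P0 \<Longrightarrow> b \<in> P0 \<Longrightarrow> a + b \<in> \<Delta> \<Longrightarrow> l (a + b) = 0 \<Longrightarrow> a + b \<in> P0"
    using P0 unfolding parabolic_def by blast+
  have "\<Delta> \<subseteq> ?P \<union> uminus ` ?P"
  proof
    fix x assume x: "x \<in> \<Delta>"
    consider "l x > 0" | "l x = 0" | "l x < 0" by linarith
    then show "x \<in> ?P \<union> uminus ` ?P"
    proof cases
      case 2
      then show ?thesis using x P0_cover by blast
    next
      case 3
      then have "- x \<in> ?P"
        using x sym uminus_image_eq_imp_minus_mem lin_functional_on_minus[OF lin inW] by auto
      then show ?thesis by (auto intro: rev_image_eqI)
    qed (use x in auto)
  qed
  moreover have "?P \<union> uminus ` ?P \<subseteq> \<Delta>"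
    using P0_sub sym by blast
  moreover have "a + b \<in> ?P" if a: "a \<in> ?P" and b: "b \<in> ?P" and ab: "a + b \<in> \<Delta>" for a b
  proof -
    have W: "a \<in> W" "b \<in> W" using a b P0_sub inW by auto
    have "l a \<ge> 0" "l b \<ge> 0" using a b P0_sub by auto
    show ?thesis
    proof (cases "a \<in> P0 \<and> b \<in> P0")
      case True
      then have "l a = 0" "l b = 0" using P0_sub by auto
      then have "l (a + b) = 0" using lin_functional_on_add[OF lin W] by simp
      then show ?thesis using True P0_closed ab by blast
    next
      case False
      then have "l a > 0 \<or> l b > 0" using a b by auto
      then have "l (a + b) > 0"
        using \<open>l a \<ge> 0\<close> \<open>l b \<ge> 0\<close> lin_functional_on_add[OF lin W] by auto
      then show ?thesis using ab by auto
    qed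
  qed
  ultimately show ?thesis
    using P0_sub unfolding parabolic_def by blast
qed

lemma strongly_parabolic_imp_parabolic:
  assumes "strongly_parabolic W \<Delta> P" and "\<Delta> \<subseteq> W" and "uminus ` \<Delta> = \<Delta>"
  shows "parabolic \<Delta> P"
  using assms
proof (induction rule: strongly_parabolic.induct)
  case (whole W \<Delta>)
  then show ?case unfolding parabolic_def by auto
next
  case (step W l P0 \<Delta>)
  have "uminus ` {\<alpha>\<in>\<Delta>. l \<alpha> = 0} = {\<alpha>\<in>\<Delta>. l \<alpha> = 0}"
    using step.prems lin_functional_on_minus[OF step.hyps(2)]
    by (intro uminus_image_Collect_eq) auto
  moreover have "{\<alpha>\<in>\<Delta>. l \<alpha> = 0} \<subseteq> {v\<in>W. l v = 0}"
    using step.prems(1) by auto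
  ultimately have "parabolic {\<alpha>\<in>\<Delta>. l \<alpha> = 0} P0"
    using step.IH by blast
  then show ?case
    using parabolic_union_positive_part step.hyps(2) step.prems by blast
qed

theorem proposition1p2:
  fixes \<Delta> P :: "'a::euclidean_space set"
  assumes "0 \<notin> \<Delta>"
    and "uminus ` \<Delta> = \<Delta>"
    and "strongly_parabolic UNIV \<Delta> P"
  shows "parabolic \<Delta> P"
  using strongly_parabolic_imp_parabolic[OF assms(3)] assms(2) by blast

end
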